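(* Let $S \subset \mathbb{R}^2$ be compact such that both $S$ and $S^\mathsf{c}$ satisfy the $r$-rolling condition, and let $\mathcal{X}_n=\{X_1,\ldots,X_n\}$ be independent and uniformly distributed on $S$. For any $\alpha\in (0,r)$, there is a constant $A > 0$ depending only on $(\alpha,r,\operatorname{diam}(S))$ such that, for every $n\ge1$, with probability at least $1-Ae^{-n/A}$ the following holds: for every connected component $\Gamma_k$ of $\partial S$, there is an $\alpha$-edge of $\mathcal{X}_n$ with an endpoint within distance $\alpha$ of $\Gamma_k$.
   Context: A set $T\subset\mathbb{R}^2$ satisfies the $r$-rolling condition ($r>0$) if for every $x \in \partial T$ there is an open ball $B$ of radius $r$ with $B \cap T = \emptyset$ and $x \in \partial B$. $S^\mathsf{c}=\mathbb{R}^2\setminus S$, $\operatorname{diam}(S)=\sup\{\|x-y\|:x,y\in S\}$. A pair of distinct sample points $(X_i,X_j)$ forms an $\alpha$-edge if there is an open ball $B$ of radius $\alpha$ with $X_i,X_j\in\partial B$ and $B\cap\mathcal{X}_n=\emptyset$. *)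

theory Defs
  imports "HOL-Probability.Probability"
begin

type_synonym point = "real ^ 2"

definition rolling :: "point set \<Rightarrow> real \<Rightarrow> bool" where
  "rolling T r \<longleftrightarrow>
     (\<forall>x\<in>frontier T. \<exists>c. ball c r \<inter> T = {} \<and> x \<in> sphere c r)"

definition alpha_edge :: "real \<Rightarrow> point set \<Rightarrow> point \<Rightarrow> point \<Rightarrow> bool" where
  "alpha_edge \<alpha> P p q \<longleftrightarrow> p \<in> P \<and> q \<in> P \<and> p \<noteq> q \<and>
     (\<exists>c. p \<in> sphere c \<alpha> \<and> q \<in> sphere c \<alpha> \<and> ball c \<alpha> \<inter> P = {})"

definition sample_space :: "point set \<Rightarrow> nat \<Rightarrow> (nat \<Rightarrow> point) measure" where
  "sample_space S n = PiM {..<n} (\<lambda>_. uniform_measure lborel S)"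

end

theory Submission
  imports Defs
begin

text \<open>
  At a boundary point \<open>x\<close> the outer and the inner rolling ball are tangent at \<open>x\<close> from opposite
  sides, so they share a unit normal \<open>v\<close>, and with \<open>4 \<rho> = \<alpha> - \<alpha>\<^sup>2 / r\<close> the balls of radius
  \<open>\<rho>\<close> around \<open>x + \<rho> v\<close> and \<open>x + 3 \<rho> v\<close> lie in \<open>S\<close>. If each of them contains a sample
  point, push an empty ball of radius \<open>\<alpha>\<close> from the (empty) outer rolling ball inwards along the
  normal, starting at depth \<open>\<alpha>\<^sup>2 / r\<close>, until it first touches a sample point \<open>p\<close>; the starting
  depth keeps \<open>p\<close> within \<open>\<alpha>\<close> of \<open>x\<close>. Rotating the empty ball about \<open>p\<close> until it touches a
  second sample point (one of the two is within \<open>2 \<alpha>\<close> of \<open>p\<close>) produces an \<open>\<alpha>\<close>-edge.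

  It remains to see that, with probability at least \<open>1 - A exp (- n / A)\<close>, every ball of radius \<open>\<rho> = 3 e\<close> inside
  \<open>S\<close> contains a sample point. A maximal \<open>2 e\<close>-separated set of centres of such balls has at most
  \<open>(diam S / e)\<^sup>2\<close> elements by a volume count, each \<open>e\<close>-ball around a centre has probability
  \<open>q \<ge> (e / diam S)\<^sup>2\<close>, and a union bound with \<open>(1 - q)\<^sup>n \<le> exp (- n q)\<close> concludes.
\<close>

section \<open>Geometry of alpha-edges near a two-sided rolling boundary\<close>

lemma tangent_disjoint_balls_opposite:
  fixes c c' x :: "'a::real_inner"
  assumes disj: "ball c r \<inter> ball c' r = {}" and "dist c x = r" and "dist c' x = r"
  shows "c' - x = x - c"
proof (cases "r = 0")
  case True
  then show ?thesis using assms by simp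
next
  case False
  then have r0: "0 < r" using assms by (metis zero_le_dist order_less_le)
  have "\<not> dist c c' < 2 * r"
  proof
    assume "dist c c' < 2 * r"
    then have "midpoint c c' \<in> ball c r \<inter> ball c' r" by (simp add: dist_midpoint)
    with disj show False by blast
  qed
  moreover have "dist c c' \<le> dist c x + dist x c'" by (rule dist_triangle)
  ultimately have "dist c c' = dist c x + dist x c'" using assms by (simp add: dist_commute)
  then have "norm (c - x) *\<^sub>R (x - c') = norm (x - c') *\<^sub>R (c - x)"
    by (simp only: dist_triangle_eq)
  then have "r *\<^sub>R (x - c') = r *\<^sub>R (c - x)"
    using assms by (simp add: dist_norm norm_minus_commute)
  then have "x - c' = c - x" using r0 by simp
  then show ?thesis by (simp add: algebra_simps)
qed

lemma dist_along_unit_vector: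
  fixes u :: "'a::real_normed_vector"
  assumes "norm u = 1"
  shows "dist (x + a *\<^sub>R u) (x + b *\<^sub>R u) = \<bar>a - b\<bar>"
proof -
  have "(x + a *\<^sub>R u) - (x + b *\<^sub>R u) = (a - b) *\<^sub>R u" by (simp add: algebra_simps)
  then show ?thesis using assms by (simp add: dist_norm)
qed

lemma rolling_two_sided_normal:
  assumes "0 < r" "rolling S r" "rolling (- S) r" "x \<in> frontier S"
  obtains v where "norm v = 1" "ball (x - r *\<^sub>R v) r \<inter> S = {}" "ball (x + r *\<^sub>R v) r \<subseteq> S"
proof -
  obtain c c' where c: "ball c r \<inter> S = {}" "dist c x = r" and c': "ball c' r \<inter> - S = {}" "dist c' x = r"
    using assms unfolding rolling_def by (metis frontier_complement mem_sphere)
  have "ball c r \<inter> ball c' r = {}" using c c' by blast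
  then have opp: "c' - x = x - c" using tangent_disjoint_balls_opposite c c' by blast
  define v where "v = (1 / r) *\<^sub>R (c' - x)"
  have "norm v = 1" using c' \<open>0 < r\<close> by (simp add: v_def dist_norm)
  moreover have "c' = x + r *\<^sub>R v" "c = x - r *\<^sub>R v" using opp \<open>0 < r\<close> by (auto simp: v_def algebra_simps)
  ultimately show ?thesis using that c c' by blast
qed

lemma dist_le_if_outside_tangent_ball:
  fixes p x u :: "'a::real_inner"
  assumes u: "norm u = 1" and outside: "r \<le> dist p (x + r *\<^sub>R u)"
    and on_sphere: "dist p (x + t *\<^sub>R u) = \<alpha>" and "\<alpha>\<^sup>2 \<le> r * t" and "0 < t" and "t < r"
  shows "dist p x \<le> \<alpha>"
proof -
  define a b where "a = (p - x) \<bullet> (p - x)" and "b = (p - x) \<bullet> u"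
  have sq: "(dist p (x + s *\<^sub>R u))\<^sup>2 = a - 2 * s * b + s\<^sup>2" for s
  proof -
    have "dist p (x + s *\<^sub>R u) = norm ((p - x) - s *\<^sub>R u)" by (simp add: dist_norm algebra_simps)
    then have "(dist p (x + s *\<^sub>R u))\<^sup>2 = ((p - x) - s *\<^sub>R u) \<bullet> ((p - x) - s *\<^sub>R u)"
      by (simp only: power2_norm_eq_inner)
    moreover have "u \<bullet> u = 1" using u by (simp add: dot_square_norm)
    ultimately show ?thesis
      unfolding a_def b_def by (simp add: inner_diff_left inner_diff_right inner_commute power2_eq_square)
  qed
  have "r\<^sup>2 \<le> (dist p (x + r *\<^sub>R u))\<^sup>2"
    using outside \<open>t < r\<close> \<open>0 < t\<close> by (intro power_mono) auto
  then have "2 * r * b \<le> a" by (simp add: sq)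
  then have "2 * r * t * b \<le> t * a" using \<open>0 < t\<close> by (metis mult.commute mult.left_commute mult_left_mono less_imp_le)
  moreover have "\<alpha>\<^sup>2 = a - 2 * t * b + t\<^sup>2" using sq[of t] on_sphere by simp
  then have "r * \<alpha>\<^sup>2 = r * a - 2 * r * t * b + r * t\<^sup>2" by (simp add: right_diff_distrib distrib_left)
  moreover have "t * \<alpha>\<^sup>2 \<le> r * t\<^sup>2"
    using mult_left_mono[OF \<open>\<alpha>\<^sup>2 \<le> r * t\<close>, of t] \<open>0 < t\<close> by (simp add: power2_eq_square algebra_simps)
  ultimately have "(r - t) * a \<le> (r - t) * \<alpha>\<^sup>2" by (simp add: algebra_simps)
  then have "a \<le> \<alpha>\<^sup>2" using \<open>t < r\<close> by simp
  then have "(dist p x)\<^sup>2 \<le> \<alpha>\<^sup>2" by (simp add: a_def dist_norm power2_norm_eq_inner)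
  then show ?thesis using on_sphere by (auto simp: power2_le_iff_abs_le)
qed

lemma infdist_attained_finite:
  fixes P :: "'a::heine_borel set"
  assumes "finite P" "P \<noteq> {}"
  obtains p where "p \<in> P" "infdist x P = dist x p"
  using infdist_attains_inf[of P x] assms finite_imp_closed by blast

lemma empty_ball_on_normal:
  fixes P :: "'a::euclidean_space set"
  assumes "0 < \<alpha>" "\<alpha> < r" and "finite P" and u: "norm u = 1"
    and outside: "\<forall>q\<in>P. r \<le> dist q (x + r *\<^sub>R u)"
    and z: "z \<in> P" "dist z (x + (\<alpha>\<^sup>2 / r) *\<^sub>R u) < \<alpha>"
  obtains w p where "p \<in> P" "dist w p = \<alpha>" "\<forall>q\<in>P. \<alpha> \<le> dist w q" "dist p x \<le> \<alpha>"
proof -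
  define s where "s = \<alpha>\<^sup>2 / r"
  have "0 < s" "s < \<alpha>" using assms by (auto simp: s_def power2_eq_square field_simps)
  define h where "h t = infdist (x + t *\<^sub>R u) P" for t
  have "continuous_on {s..\<alpha>} h" unfolding h_def by (intro continuous_intros)
  moreover have "h s < \<alpha>" using infdist_le[OF z(1), of "x + s *\<^sub>R u"] z(2)
    by (simp add: h_def s_def dist_commute)
  moreover have "\<alpha> \<le> h \<alpha>"
  proof -
    obtain q where q: "q \<in> P" "h \<alpha> = dist (x + \<alpha> *\<^sub>R u) q"
      using infdist_attained_finite[OF \<open>finite P\<close>] z(1) unfolding h_def by blast
    have "dist (x + \<alpha> *\<^sub>R u) (x + r *\<^sub>R u) = r - \<alpha>"
      using u \<open>\<alpha> < r\<close> by (simp add: dist_norm flip: scaleR_diff_left)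
    moreover have "r \<le> dist q (x + r *\<^sub>R u)" using outside q(1) by blast
    ultimately show ?thesis using q(2) dist_triangle[of q "x + r *\<^sub>R u" "x + \<alpha> *\<^sub>R u"]
      by (simp add: dist_commute)
  qed
  ultimately obtain t where t: "s \<le> t" "t \<le> \<alpha>" "h t = \<alpha>"
    using IVT'[of h s \<alpha> \<alpha>] \<open>s < \<alpha>\<close> by force
  obtain p where p: "p \<in> P" "h t = dist (x + t *\<^sub>R u) p"
    using infdist_attained_finite[OF \<open>finite P\<close>] z(1) unfolding h_def by blast
  have "\<forall>q\<in>P. \<alpha> \<le> dist (x + t *\<^sub>R u) q" using t(3) infdist_le unfolding h_def by metis
  moreover have "dist p x \<le> \<alpha>"
  proof (rule dist_le_if_outside_tangent_ball[OF u])
    show "r \<le> dist p (x + r *\<^sub>R u)" using outside p(1) by blast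
    show "dist p (x + t *\<^sub>R u) = \<alpha>" using p t by (simp add: dist_commute)
    show "\<alpha>\<^sup>2 \<le> r * t" using t(1) \<open>\<alpha> < r\<close> \<open>0 < \<alpha>\<close> by (simp add: s_def field_simps)
  qed (use \<open>0 < s\<close> t \<open>\<alpha> < r\<close> in auto)
  ultimately show ?thesis using that p t by auto
qed

lemma alpha_edge_from_empty_ball:
  fixes P :: "point set"
  assumes "0 < \<alpha>" and "finite P" and p: "p \<in> P" "dist w p = \<alpha>"
    and empty: "\<forall>q\<in>P. \<alpha> \<le> dist w q"
    and q0: "q0 \<in> P" "q0 \<noteq> p" "dist q0 p < 2 * \<alpha>"
  obtains q where "alpha_edge \<alpha> P p q"
proof -
  define Q where "Q = P - {p}"
  have "finite Q" "q0 \<in> Q" using assms by (auto simp: Q_def)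
  \<comment> \<open>Rotate the empty ball about \<open>p\<close>: the distance \<open>g\<close> from its centre to \<open>Q\<close> is at least \<open>\<alpha>\<close>
    at \<open>w\<close> and below \<open>\<alpha>\<close> in the direction of \<open>q0\<close>, so it equals \<open>\<alpha>\<close> somewhere on the sphere.\<close>
  define g where "g y = infdist y Q" for y
  have conn: "connected (g ` sphere p \<alpha>)"
    unfolding g_def by (intro connected_continuous_image continuous_intros connected_sphere) simp
  have w: "w \<in> sphere p \<alpha>" using p by (simp add: dist_commute)
  have gw: "\<alpha> \<le> g w"
  proof -
    obtain q where "q \<in> Q" "g w = dist w q"
      using infdist_attained_finite[OF \<open>finite Q\<close>] \<open>q0 \<in> Q\<close> unfolding g_def by blast
    then show ?thesis using empty by (auto simp: Q_def)
  qed
  define w' where "w' = p + (\<alpha> / dist q0 p) *\<^sub>R (q0 - p)"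
  have w': "w' \<in> sphere p \<alpha>" "g w' < \<alpha>"
  proof -
    have "q0 - w' = (1 - \<alpha> / dist q0 p) *\<^sub>R (q0 - p)" by (simp add: w'_def algebra_simps)
    then have "dist w' q0 = \<bar>1 - \<alpha> / dist q0 p\<bar> * dist q0 p"
      by (simp add: dist_norm norm_minus_commute)
    also have "\<dots> = \<bar>dist q0 p - \<alpha>\<bar>"
      using q0 by (simp add: abs_mult_pos left_diff_distrib)
    finally have "dist w' q0 = \<bar>dist q0 p - \<alpha>\<bar>" .
    then show "g w' < \<alpha>"
      using infdist_le[OF \<open>q0 \<in> Q\<close>, of w'] q0 \<open>0 < \<alpha>\<close> zero_less_dist_iff[of q0 p]
      unfolding g_def by linarith
    show "w' \<in> sphere p \<alpha>" using q0 \<open>0 < \<alpha>\<close> by (simp add: w'_def dist_norm)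
  qed
  have "\<alpha> \<in> g ` sphere p \<alpha>"
    using connected_contains_Icc[OF conn imageI[OF w'(1)] imageI[OF w]] w'(2) gw by auto
  then obtain c where c: "c \<in> sphere p \<alpha>" "g c = \<alpha>" by auto
  obtain q where q: "q \<in> Q" "infdist c Q = dist c q"
    using infdist_attained_finite[OF \<open>finite Q\<close>] \<open>q0 \<in> Q\<close> by blast
  have "ball c \<alpha> \<inter> P = {}"
    using c infdist_le[of _ Q c] by (force simp: g_def Q_def dist_commute)
  then have "alpha_edge \<alpha> P p q"
    using p c q unfolding alpha_edge_def by (auto simp: g_def Q_def dist_commute)
  then show ?thesis by (rule that)
qed

lemma alpha_edge_near_tangent_point:
  fixes P :: "point set"
  assumes "0 < \<alpha>" "\<alpha> < r" "finite P" "norm u = 1"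
    and outside: "\<forall>q\<in>P. r \<le> dist q (x + r *\<^sub>R u)"
    and z: "z1 \<in> P" "z2 \<in> P" "z1 \<noteq> z2" "dist z1 x < \<alpha> - \<alpha>\<^sup>2 / r" "dist z2 x < \<alpha> - \<alpha>\<^sup>2 / r"
  obtains p q where "alpha_edge \<alpha> P p q" "dist p x \<le> \<alpha>"
proof -
  have "dist z1 (x + (\<alpha>\<^sup>2 / r) *\<^sub>R u) < \<alpha>"
    using dist_triangle[of z1 "x + (\<alpha>\<^sup>2 / r) *\<^sub>R u" x] z \<open>norm u = 1\<close> \<open>0 < \<alpha>\<close> \<open>\<alpha> < r\<close>
    by (simp add: dist_norm)
  then obtain w p where p: "p \<in> P" "dist w p = \<alpha>" "\<forall>q\<in>P. \<alpha> \<le> dist w q" "dist p x \<le> \<alpha>"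
    using empty_ball_on_normal[OF assms(1-5) z(1)] by blast
  obtain q0 where "q0 \<in> P" "q0 \<noteq> p" "dist q0 x < \<alpha>"
  proof -
    have "\<alpha> - \<alpha>\<^sup>2 / r \<le> \<alpha>" using \<open>0 < \<alpha>\<close> \<open>\<alpha> < r\<close> by simp
    then show ?thesis using that z by (cases "z1 = p") auto
  qed
  then have "dist q0 p < 2 * \<alpha>" using dist_triangle[of q0 p x] p(4) by (simp add: dist_commute)
  then obtain q where "alpha_edge \<alpha> P p q"
    using alpha_edge_from_empty_ball[OF \<open>0 < \<alpha>\<close> \<open>finite P\<close> p(1-3) \<open>q0 \<in> P\<close> \<open>q0 \<noteq> p\<close>] by blast
  then show ?thesis using that p(4) by blast
qed

lemma alpha_edge_near_frontier:
  fixes S P :: "point set"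
  assumes "0 < \<alpha>" "\<alpha> < r" "rolling S r" "rolling (- S) r" "finite P" "P \<subseteq> S"
    and dense: "\<forall>y. ball y \<rho> \<subseteq> S \<longrightarrow> (\<exists>z\<in>P. dist z y < \<rho>)" and \<rho>: "4 * \<rho> = \<alpha> - \<alpha>\<^sup>2 / r"
    and "x \<in> frontier S"
  obtains p q where "alpha_edge \<alpha> P p q" "dist p x \<le> \<alpha>"
proof -
  have "0 < \<alpha>\<^sup>2 / r" using \<open>0 < \<alpha>\<close> \<open>\<alpha> < r\<close> by simp
  moreover have "\<alpha>\<^sup>2 / r < \<alpha>" using \<open>0 < \<alpha>\<close> \<open>\<alpha> < r\<close> by (simp add: power2_eq_square field_simps)
  ultimately have "0 < \<rho>" "4 * \<rho> < r" using \<rho> \<open>\<alpha> < r\<close> by linarith+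
  obtain v where v: "norm v = 1" "ball (x - r *\<^sub>R v) r \<inter> S = {}" "ball (x + r *\<^sub>R v) r \<subseteq> S"
    using rolling_two_sided_normal[OF _ assms(3,4) \<open>x \<in> frontier S\<close>] \<open>0 < \<alpha>\<close> \<open>\<alpha> < r\<close> by auto
  note dist_v = dist_along_unit_vector[OF v(1)]
  have inside: "ball (x + t *\<^sub>R v) \<rho> \<subseteq> S" if "\<rho> \<le> t" "t \<le> r" for t
  proof -
    have "ball (x + t *\<^sub>R v) \<rho> \<subseteq> ball (x + r *\<^sub>R v) r"
      using that v(1) dist_v[of x t r] by (simp add: ball_subset_ball_iff)
    then show ?thesis using v(3) by blast
  qed
  obtain z1 where z1: "z1 \<in> P" "dist z1 (x + \<rho> *\<^sub>R v) < \<rho>"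
    using dense inside[of \<rho>] \<open>0 < \<rho>\<close> \<open>4 * \<rho> < r\<close> by auto
  obtain z2 where z2: "z2 \<in> P" "dist z2 (x + (3 * \<rho>) *\<^sub>R v) < \<rho>"
    using dense inside[of "3 * \<rho>"] \<open>0 < \<rho>\<close> \<open>4 * \<rho> < r\<close> by auto
  have d1: "dist (x + \<rho> *\<^sub>R v) x = \<rho>" and d3: "dist (x + (3 * \<rho>) *\<^sub>R v) x = 3 * \<rho>"
    and d13: "dist (x + \<rho> *\<^sub>R v) (x + (3 * \<rho>) *\<^sub>R v) = 2 * \<rho>"
    using dist_v[of x \<rho> 0] dist_v[of x "3 * \<rho>" 0] dist_v[of x \<rho> "3 * \<rho>"] \<open>0 < \<rho>\<close> by simp_all
  have "z1 \<noteq> z2"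
  proof
    assume "z1 = z2"
    then have "dist (x + \<rho> *\<^sub>R v) (x + (3 * \<rho>) *\<^sub>R v) < 2 * \<rho>"
      using z1 z2 dist_triangle[of "x + \<rho> *\<^sub>R v" "x + (3 * \<rho>) *\<^sub>R v" z1] by (simp add: dist_commute)
    with d13 show False by simp
  qed
  moreover have "dist z1 x < \<alpha> - \<alpha>\<^sup>2 / r" "dist z2 x < \<alpha> - \<alpha>\<^sup>2 / r"
    using z1(2) z2(2) d1 d3 \<open>0 < \<rho>\<close> \<rho>
      dist_triangle[of z1 x "x + \<rho> *\<^sub>R v"] dist_triangle[of z2 x "x + (3 * \<rho>) *\<^sub>R v"]
    by linarith+
  moreover have "\<forall>q\<in>P. r \<le> dist q (x + r *\<^sub>R - v)"
    using v(2) \<open>P \<subseteq> S\<close> by (force simp: dist_commute)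
  moreover have "norm (- v) = 1" using v(1) by simp
  ultimately show ?thesis
    using alpha_edge_near_tangent_point[OF assms(1,2,5) _ _ z1(1) z2(1)] that by blast
qed

section \<open>Measurability of the event\<close>

lemma closed_Collect_bex_compact:
  fixes T :: "('a::topological_space \<times> 'b::topological_space) set"
  assumes "compact K" and "closed T"
  shows "closed {x. \<exists>y\<in>K. (x, y) \<in> T}"
proof -
  have "open (- {x. \<exists>y\<in>K. (x, y) \<in> T})"
  proof (subst open_subopen, intro ballI)
    fix x assume "x \<in> - {x. \<exists>y\<in>K. (x, y) \<in> T}"
    then have "{x} \<times> K \<subseteq> - T" by auto
    then obtain U where "x \<in> U" "open U" "U \<times> K \<subseteq> - T"
      using Elementary_Topology.tube_lemma[OF \<open>compact K\<close>] \<open>closed T\<close> by (metis open_Compl)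
    then show "\<exists>U. open U \<and> x \<in> U \<and> U \<subseteq> - {x. \<exists>y\<in>K. (x, y) \<in> T}" by blast
  qed
  then show ?thesis by (simp add: closed_open)
qed

lemma sets_Collect_finite_pattern:
  assumes "finite I" and E: "\<And>i. i \<in> I \<Longrightarrow> {X \<in> space M. E i X} \<in> sets M"
    and Q: "\<And>T. T \<subseteq> I \<Longrightarrow> {X \<in> space M. Q T X} \<in> sets M"
  shows "{X \<in> space M. Q {i \<in> I. E i X} X} \<in> sets M"
proof -
  have "{X \<in> space M. E i X \<longleftrightarrow> i \<in> T} \<in> sets M" if "i \<in> I" for i T
  proof (cases "i \<in> T")
    case True
    then show ?thesis using E[OF that] by simp
  next
    case False
    then show ?thesis using sets.sets_Collect_neg[OF E[OF that]] by simp
  qed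
  then have "{X \<in> space M. \<forall>i\<in>I. E i X \<longleftrightarrow> i \<in> T} \<in> sets M" for T
    using \<open>finite I\<close> by (intro sets.sets_Collect_finite_All)
  then have "{X \<in> space M. \<exists>T\<in>Pow I. (\<forall>i\<in>I. E i X \<longleftrightarrow> i \<in> T) \<and> Q T X} \<in> sets M"
    using \<open>finite I\<close> Q by (intro sets.sets_Collect_finite_Ex sets.sets_Collect_conj) auto
  moreover have "(\<exists>T\<in>Pow I. (\<forall>i\<in>I. E i X \<longleftrightarrow> i \<in> T) \<and> Q T X) \<longleftrightarrow> Q {i \<in> I. E i X} X" for X
  proof
    assume "\<exists>T\<in>Pow I. (\<forall>i\<in>I. E i X \<longleftrightarrow> i \<in> T) \<and> Q T X"
    then obtain T where "T \<subseteq> I" "\<forall>i\<in>I. E i X \<longleftrightarrow> i \<in> T" "Q T X" by blast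
    moreover from this have "T = {i \<in> I. E i X}" by auto
    ultimately show "Q {i \<in> I. E i X} X" by simp
  qed (intro bexI[of _ "{i \<in> I. E i X}"], auto)
  ultimately show ?thesis by simp
qed

lemma continuous_on_fst_component:
  "continuous_on S (\<lambda>z::('a \<Rightarrow> 'b::topological_space) \<times> 'c::topological_space. fst z i)"
  by (rule continuous_on_compose2[OF continuous_on_product_coordinates continuous_on_fst[OF continuous_on_id]]) auto

lemma alpha_edge_image_iff:
  "alpha_edge \<alpha> (X ` I) p q \<longleftrightarrow>
     (\<exists>i\<in>I. \<exists>j\<in>I. p = X i \<and> q = X j \<and> alpha_edge \<alpha> (X ` I) (X i) (X j))"
  by (auto simp: alpha_edge_def)

lemma alpha_edge_components_iff:
  assumes "0 < \<alpha>" "i < n" "j < n"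
  shows "alpha_edge \<alpha> (X ` {..<n}) (X i) (X j) \<longleftrightarrow> X i \<noteq> X j \<and>
    (\<exists>e\<in>sphere 0 1. dist (X i + \<alpha> *\<^sub>R e) (X j) = \<alpha> \<and> (\<forall>k<n. \<alpha> \<le> dist (X i + \<alpha> *\<^sub>R e) (X k)))"
proof -
  have centre: "(\<exists>c. X i \<in> sphere c \<alpha> \<and> P c) \<longleftrightarrow> (\<exists>e\<in>sphere 0 1. P (X i + \<alpha> *\<^sub>R e))" for P
  proof
    assume "\<exists>c. X i \<in> sphere c \<alpha> \<and> P c"
    then obtain c where "dist c (X i) = \<alpha>" "P c" by auto
    moreover have "X i + \<alpha> *\<^sub>R ((1 / \<alpha>) *\<^sub>R (c - X i)) = c" using assms(1) by simp
    ultimately show "\<exists>e\<in>sphere 0 1. P (X i + \<alpha> *\<^sub>R e)" using assms(1)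
      by (intro bexI[of _ "(1 / \<alpha>) *\<^sub>R (c - X i)"]) (auto simp: dist_norm norm_minus_commute)
  next
    assume "\<exists>e\<in>sphere 0 1. P (X i + \<alpha> *\<^sub>R e)"
    then obtain e where "norm e = 1" "P (X i + \<alpha> *\<^sub>R e)" by auto
    then show "\<exists>c. X i \<in> sphere c \<alpha> \<and> P c"
      using assms(1) by (intro exI[of _ "X i + \<alpha> *\<^sub>R e"]) (simp add: dist_norm)
  qed
  have "ball c \<alpha> \<inter> X ` {..<n} = {} \<longleftrightarrow> (\<forall>k<n. \<alpha> \<le> dist c (X k))" for c
    by (auto simp: not_less disjoint_iff)
  then have "alpha_edge \<alpha> (X ` {..<n}) (X i) (X j) \<longleftrightarrow> X i \<noteq> X j \<and>
      (\<exists>c. X i \<in> sphere c \<alpha> \<and> (dist c (X j) = \<alpha> \<and> (\<forall>k<n. \<alpha> \<le> dist c (X k))))"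
    using assms by (auto simp: alpha_edge_def)
  then show ?thesis by (simp only: centre)
qed

lemma sets_borel_alpha_edge_components:
  assumes "0 < \<alpha>" "i < n" "j < n"
  shows "{X :: nat \<Rightarrow> point. alpha_edge \<alpha> (X ` {..<n}) (X i) (X j)} \<in> sets borel"
proof -
  \<comment> \<open>Parametrising the centre by its unit direction from \<open>X i\<close> makes the existential
    quantifier range over a compact set, so it preserves closedness.\<close>
  define T :: "((nat \<Rightarrow> point) \<times> point) set" where
    "T = {z. dist (fst z i + \<alpha> *\<^sub>R snd z) (fst z j) = \<alpha> \<and>
             (\<forall>k\<in>{..<n}. \<alpha> \<le> dist (fst z i + \<alpha> *\<^sub>R snd z) (fst z k))}"
  have "T = {z. dist (fst z i + \<alpha> *\<^sub>R snd z) (fst z j) = \<alpha>} \<inter>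
      (\<Inter>k\<in>{..<n}. {z. \<alpha> \<le> dist (fst z i + \<alpha> *\<^sub>R snd z) (fst z k)})"
    unfolding T_def by auto
  moreover have "closed {z :: (nat \<Rightarrow> point) \<times> point. dist (fst z i + \<alpha> *\<^sub>R snd z) (fst z j) = \<alpha>}"
    by (rule closed_Collect_eq) (intro continuous_intros continuous_on_fst_component)+
  moreover have "closed {z :: (nat \<Rightarrow> point) \<times> point. \<alpha> \<le> dist (fst z i + \<alpha> *\<^sub>R snd z) (fst z k)}" for k
    by (rule closed_Collect_le) (intro continuous_intros continuous_on_fst_component)+
  ultimately have "closed {X. \<exists>e\<in>sphere 0 1. (X, e) \<in> T}"
    by (intro closed_Collect_bex_compact) (auto intro: closed_INT closed_Int)
  moreover have "open {X :: nat \<Rightarrow> point. X i \<noteq> X j}"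
    by (intro open_Collect_neq continuous_on_product_coordinates)
  moreover have "{X. alpha_edge \<alpha> (X ` {..<n}) (X i) (X j)} = {X. X i \<noteq> X j} \<inter> {X. \<exists>e\<in>sphere 0 1. (X, e) \<in> T}"
    using alpha_edge_components_iff[OF assms] by (auto simp: T_def)
  ultimately show ?thesis by auto
qed

lemma sets_borel_alpha_edge_event:
  fixes F :: "point set" and K :: "point \<Rightarrow> point set"
  assumes "0 < \<alpha>"
  shows "{X :: nat \<Rightarrow> point. \<forall>x\<in>F. \<exists>p q. alpha_edge \<alpha> (X ` {..<n}) p q \<and>
           (infdist p (K x) \<le> \<alpha> \<or> infdist q (K x) \<le> \<alpha>)} \<in> sets borel"
proof -
  \<comment> \<open>Once the set of index pairs forming \<open>\<alpha>\<close>-edges is fixed, the condition on the sample is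
    closed, so the quantifier over \<open>F\<close> only leaves a finite union.\<close>
  define I where "I = {..<n} \<times> {..<n}"
  define E where "E ij X \<longleftrightarrow> alpha_edge \<alpha> (X ` {..<n}) (X (fst ij)) (X (snd ij))" for ij and X :: "nat \<Rightarrow> point"
  define near where "near x p \<longleftrightarrow> infdist p (K x) \<le> \<alpha>" for x p
  define Q where "Q T X \<longleftrightarrow> (\<forall>x\<in>F. \<exists>ij\<in>T. near x (X (fst ij)) \<or> near x (X (snd ij)))"
    for T and X :: "nat \<Rightarrow> point"
  have "{X \<in> space borel. Q {ij \<in> I. E ij X} X} \<in> sets borel"
  proof (rule sets_Collect_finite_pattern)
    show "finite I" by (simp add: I_def)
    show "{X \<in> space borel. E ij X} \<in> sets borel" if "ij \<in> I" for ij
      using sets_borel_alpha_edge_components[OF assms] that by (auto simp: E_def I_def)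
    have closed_near: "closed {X :: nat \<Rightarrow> point. near x (X k)}" for x k
      unfolding near_def
      by (intro closed_Collect_le continuous_on_const continuous_on_compose2[OF
          continuous_on_infdist[OF continuous_on_id] continuous_on_product_coordinates]) auto
    then have "closed {X. Q T X}" if "T \<subseteq> I" for T
    proof -
      have "{X. Q T X} = (\<Inter>x\<in>F. \<Union>ij\<in>T. {X. near x (X (fst ij))} \<union> {X. near x (X (snd ij))})"
        by (auto simp: Q_def)
      then show ?thesis
        using closed_near finite_subset[OF that] by (auto simp: I_def intro!: closed_INT closed_UN closed_Un)
    qed
    then show "{X \<in> space borel. Q T X} \<in> sets borel" if "T \<subseteq> I" for T
      using that by simp
  qed
  moreover have "(\<exists>p q. alpha_edge \<alpha> (X ` {..<n}) p q \<and> (near x p \<or> near x q)) \<longleftrightarrow>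
      (\<exists>ij\<in>{ij \<in> I. E ij X}. near x (X (fst ij)) \<or> near x (X (snd ij)))" for X x
    by (subst alpha_edge_image_iff) (auto simp: E_def I_def)
  ultimately show ?thesis by (simp add: Q_def near_def)
qed

lemma borel_measurable_sample_space_id: "(\<lambda>X. X) \<in> borel_measurable (sample_space S n)"
proof (rule measurable_coordinatewise_then_product)
  fix i
  show "(\<lambda>X. X i) \<in> borel_measurable (sample_space S n)"
  proof (cases "i < n")
    case True
    then have "(\<lambda>X. X i) \<in> measurable (sample_space S n) (uniform_measure lborel S)"
      unfolding sample_space_def by (intro measurable_component_singleton) auto
    then show ?thesis by (simp cong: measurable_cong_sets)
  next
    case False
    then have "X i = undefined" if "X \<in> space (sample_space S n)" for X
      using that by (auto simp: sample_space_def space_PiM PiE_def extensional_def)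
    then show ?thesis
      using measurable_cong[of "sample_space S n" "\<lambda>X. X i" "\<lambda>X. undefined" borel] by simp
  qed
qed

lemma sets_sample_space_alpha_edge_event:
  fixes F :: "point set" and K :: "point \<Rightarrow> point set"
  assumes "0 < \<alpha>"
  shows "{X \<in> space (sample_space S n). \<forall>x\<in>F. \<exists>p q. alpha_edge \<alpha> (X ` {..<n}) p q \<and>
           (infdist p (K x) \<le> \<alpha> \<or> infdist q (K x) \<le> \<alpha>)} \<in> sets (sample_space S n)"
  using measurable_sets[OF borel_measurable_sample_space_id sets_borel_alpha_edge_event[OF assms]]
  by (simp add: Collect_conj_eq Int_commute)

section \<open>Probability that a sample meets every ball of a net\<close>

lemma prob_PiM_every_set_hit:
  fixes q :: real
  assumes "prob_space U" and "S \<in> sets U" "measure U S = 1" and "finite G"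
    and B: "\<And>g. g \<in> G \<Longrightarrow> B g \<in> sets U" "\<And>g. g \<in> G \<Longrightarrow> B g \<subseteq> S"
    and q: "\<And>g. g \<in> G \<Longrightarrow> q \<le> measure U (B g)"
  shows "1 - card G * (1 - q) ^ n \<le>
    measure (PiM {..<n} (\<lambda>_. U)) {X \<in> PiE {..<n} (\<lambda>_. S). \<forall>g\<in>G. \<exists>i<n. X i \<in> B g}"
proof -
  interpret U: prob_space U by fact
  interpret P: finite_product_prob_space "\<lambda>_. U" "{..<n}" by unfold_locales simp
  let ?M = "PiM {..<n} (\<lambda>_. U)"
  let ?miss = "\<lambda>g. PiE {..<n} (\<lambda>_. S - B g)"
  have miss_sets: "?miss g \<in> sets ?M" if "g \<in> G" for g
    using B(1)[OF that] \<open>S \<in> sets U\<close> by (intro sets_PiM_I_finite) auto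
  have "measure ?M (?miss g) \<le> (1 - q) ^ n" if "g \<in> G" for g
  proof -
    have "measure U (S - B g) = 1 - measure U (B g)"
      using U.finite_measure_Diff[OF \<open>S \<in> sets U\<close> B(1)[OF that]] B(2)[OF that] \<open>measure U S = 1\<close> by simp
    then have "measure U (S - B g) \<le> 1 - q" using q[OF that] by simp
    moreover have "measure ?M (?miss g) = measure U (S - B g) ^ n"
      using P.prob_times[of "\<lambda>_. S - B g"] B(1)[OF that] \<open>S \<in> sets U\<close> by auto
    ultimately show ?thesis by (simp add: power_mono)
  qed
  then have "(\<Sum>g\<in>G. measure ?M (?miss g)) \<le> card G * (1 - q) ^ n"
    using sum_mono[of G "\<lambda>g. measure ?M (?miss g)" "\<lambda>_. (1 - q) ^ n"] by simp
  moreover have "measure ?M (\<Union>g\<in>G. ?miss g) \<le> (\<Sum>g\<in>G. measure ?M (?miss g))"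
    using \<open>finite G\<close> miss_sets by (intro measure_UNION_le) auto
  ultimately have miss: "measure ?M (\<Union>g\<in>G. ?miss g) \<le> card G * (1 - q) ^ n" by linarith
  let ?hit = "{X \<in> PiE {..<n} (\<lambda>_. S). \<forall>g\<in>G. \<exists>i<n. X i \<in> B g}"
  have S_sets: "PiE {..<n} (\<lambda>_. S) \<in> sets ?M"
    using \<open>S \<in> sets U\<close> by (intro sets_PiM_I_finite) auto
  have bad_sets: "(\<Union>g\<in>G. ?miss g) \<in> sets ?M" using miss_sets \<open>finite G\<close> by auto
  have "?hit = PiE {..<n} (\<lambda>_. S) - (\<Union>g\<in>G. ?miss g)"
    by (auto simp: PiE_def Pi_def)
  then have hit_sets: "?hit \<in> sets ?M" using S_sets bad_sets by auto
  have "1 = measure ?M (PiE {..<n} (\<lambda>_. S))"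
    using P.prob_times[of "\<lambda>_. S"] \<open>S \<in> sets U\<close> \<open>measure U S = 1\<close> by simp
  also have "\<dots> \<le> measure ?M (?hit \<union> (\<Union>g\<in>G. ?miss g))"
    using hit_sets bad_sets by (intro P.finite_measure_mono) (auto simp: PiE_def Pi_def)
  also have "\<dots> \<le> measure ?M ?hit + measure ?M (\<Union>g\<in>G. ?miss g)"
    using hit_sets bad_sets by (rule measure_Un_le)
  finally show ?thesis using miss by linarith
qed

lemma measure_ball_translate:
  fixes c :: "'a::euclidean_space"
  shows "measure lborel (ball c e) = measure lborel (ball (0::'a) e)"
proof (cases "0 \<le> e")
  case True
  then show ?thesis
    using content_ball_conv_unit_ball[OF True, of c] content_ball_conv_unit_ball[OF True, of "0::'a"] by argo
qed (simp add: ball_empty)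

lemma separated_net_exists:
  fixes S Y :: "'a::euclidean_space set"
  assumes "0 < e" and "S \<in> fmeasurable lborel" and inside: "\<And>y. y \<in> Y \<Longrightarrow> ball y e \<subseteq> S"
  obtains G where "finite G" "G \<subseteq> Y" "\<And>y. y \<in> Y \<Longrightarrow> \<exists>g\<in>G. dist g y < 2 * e"
    "real (card G) * measure lborel (ball (0::'a) e) \<le> measure lborel S"
proof -
  define V where "V = measure lborel (ball (0::'a) e)"
  have "0 < V" unfolding V_def using \<open>0 < e\<close> by (intro content_ball_pos)
  define separated where "separated F \<longleftrightarrow> finite F \<and> F \<subseteq> Y \<and> (\<forall>g\<in>F. \<forall>g'\<in>F. g \<noteq> g' \<longrightarrow> 2 * e \<le> dist g g')"
    for F
  have packing: "real (card F) * V \<le> measure lborel S" if "separated F" for F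
  proof -
    have F: "finite F" "F \<subseteq> Y" "\<And>g g'. g \<in> F \<Longrightarrow> g' \<in> F \<Longrightarrow> g \<noteq> g' \<Longrightarrow> 2 * e \<le> dist g g'"
      using that by (auto simp: separated_def)
    have "ball g e \<in> fmeasurable lborel" for g :: 'a
      using emeasure_lborel_ball_finite[of g e] by (simp add: fmeasurable_def)
    moreover have "pairwise (\<lambda>g g'. disjnt (ball g e) (ball g' e)) F"
      using F(3) by (simp add: pairwise_def disjnt_def disjoint_ballI)
    ultimately have "measure lborel (\<Union>g\<in>F. ball g e) = (\<Sum>g\<in>F. measure lborel (ball g e))"
      using F(1) by (intro measure_UNION') auto
    also have "\<dots> = (\<Sum>g\<in>F. V)" unfolding V_def by (intro sum.cong refl measure_ball_translate)
    also have "\<dots> = real (card F) * V" by simp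
    finally have "measure lborel (\<Union>g\<in>F. ball g e) = real (card F) * V" .
    moreover have "measure lborel (\<Union>g\<in>F. ball g e) \<le> measure lborel S"
      using F(1,2) inside \<open>S \<in> fmeasurable lborel\<close> by (intro measure_mono_fmeasurable) auto
    ultimately show ?thesis by simp
  qed
  define N where "N = nat \<lfloor>measure lborel S / V\<rfloor> + 1"
  have bounded: "card F < N" if "separated F" for F
  proof -
    have "real (card F) \<le> measure lborel S / V" using packing[OF that] \<open>0 < V\<close> by (simp add: field_simps)
    then show ?thesis unfolding N_def by linarith
  qed
  have "\<exists>G. separated G \<and> (\<forall>F. separated F \<longrightarrow> card F \<le> card G)"
    by (rule ex_has_greatest_nat[of separated "{}" card N]) (auto simp: bounded, simp add: separated_def)
  then obtain G where G: "separated G" and maximal: "\<And>F. separated F \<Longrightarrow> card F \<le> card G"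
    by blast
  have cover: "\<exists>g\<in>G. dist g y < 2 * e" if "y \<in> Y" for y
  proof (rule ccontr)
    assume "\<not> ?thesis"
    then have far: "\<forall>g\<in>G. 2 * e \<le> dist g y" by (auto simp: not_less)
    then have "y \<notin> G" using \<open>0 < e\<close> by force
    moreover have "separated (insert y G)" using G far \<open>y \<in> Y\<close> by (auto simp: separated_def dist_commute)
    ultimately show False using maximal[of "insert y G"] G by (simp add: separated_def)
  qed
  show ?thesis
  proof (rule that)
    show "finite G" "G \<subseteq> Y" using G by (auto simp: separated_def)
    show "real (card G) * measure lborel (ball (0::'a) e) \<le> measure lborel S"
      using packing[OF G] by (simp add: V_def)
  qed (fact cover)
qed

lemma prob_space_sample_space:
  assumes "S \<in> fmeasurable lborel" "0 < measure lborel S"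
  shows "prob_space (sample_space S n)"
  unfolding sample_space_def using assms emeasure_eq_measure2[OF assms(1)]
  by (intro prob_space_PiM prob_space_uniform_measure) (auto simp: fmeasurable_def)

lemma measure_pos_if_rolling_complement:
  fixes S :: "point set"
  assumes "0 < r" "compact S" "S \<noteq> {}" "rolling (- S) r"
  shows "0 < measure lborel S"
proof -
  have "S \<noteq> UNIV" using compact_imp_bounded[OF \<open>compact S\<close>] not_bounded_UNIV by auto
  then obtain x where "x \<in> frontier S" using frontier_not_empty[OF \<open>S \<noteq> {}\<close>] by blast
  then obtain c where "ball c r \<inter> - S = {}" using \<open>rolling (- S) r\<close> unfolding rolling_def by auto
  then have "ball c r \<subseteq> S" by blast
  then have "measure lborel (ball c r) \<le> measure lborel S"
    using fmeasurable_compact[OF \<open>compact S\<close>] by (intro measure_mono_fmeasurable) auto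
  moreover have "0 < measure lborel (ball c r)" using \<open>0 < r\<close> by (intro content_ball_pos)
  ultimately show ?thesis by linarith
qed

lemma mult_exp_le_succ:
  fixes a t :: real
  assumes "0 \<le> a" "0 \<le> t"
  shows "a * exp (- t / a) \<le> (a + 1) * exp (- t / (a + 1))"
proof (cases "a = 0")
  case False
  then have "t / (a + 1) \<le> t / a" using assms by (intro divide_left_mono) auto
  then show ?thesis using assms by (intro mult_mono) auto
qed simp

lemma measure_le_diameter_power:
  fixes S :: "'a::euclidean_space set"
  assumes "compact S"
  shows "measure lborel S \<le> diameter S ^ DIM('a) * measure lborel (ball (0::'a) 1)"
proof (cases "S = {}")
  case False
  then obtain s where "s \<in> S" by blast
  then have "S \<subseteq> cball s (diameter S)"
    using diameter_bounded_bound[OF compact_imp_bounded[OF \<open>compact S\<close>] \<open>s \<in> S\<close>]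
    by (auto simp: dist_commute)
  then have "measure lborel S \<le> measure lborel (cball s (diameter S))"
    using fmeasurable_compact[OF \<open>compact S\<close>] emeasure_lborel_cball_finite[of s "diameter S"]
    by (intro measure_mono_fmeasurable) (auto simp: fmeasurable_def)
  also have "\<dots> = diameter S ^ DIM('a) * measure lborel (ball (0::'a) 1)"
    using content_cball_conv_ball[of s] content_ball_conv_unit_ball[OF diameter_ge_0, of S s]
      compact_imp_bounded[OF \<open>compact S\<close>] by simp
  finally show ?thesis .
qed simp

lemma interior_net_exists:
  fixes S :: "point set"
  assumes "compact S" "0 < e"
  obtains G where "finite G" "\<And>g. g \<in> G \<Longrightarrow> ball g e \<subseteq> S"
    "\<And>y. ball y (3 * e) \<subseteq> S \<Longrightarrow> \<exists>g\<in>G. dist g y < 2 * e" "real (card G) \<le> (diameter S / e)\<^sup>2"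
proof -
  define V where "V = measure lborel (ball (0::point) 1)"
  have "0 < V" unfolding V_def by (intro content_ball_pos) simp
  have "ball y e \<subseteq> S" if "y \<in> {y. ball y (3 * e) \<subseteq> S}" for y
    using that subset_ball[of e "3 * e" y] \<open>0 < e\<close> by auto
  then obtain G where G: "finite G" "G \<subseteq> {y. ball y (3 * e) \<subseteq> S}"
      "\<And>y. y \<in> {y. ball y (3 * e) \<subseteq> S} \<Longrightarrow> \<exists>g\<in>G. dist g y < 2 * e"
      "real (card G) * measure lborel (ball (0::point) e) \<le> measure lborel S"
    by (rule separated_net_exists[OF \<open>0 < e\<close> fmeasurable_compact[OF \<open>compact S\<close>]]) blast+
  have "real (card G) * (e\<^sup>2 * V) = real (card G) * measure lborel (ball (0::point) e)"
    using content_ball_conv_unit_ball[of e "0::point"] \<open>0 < e\<close> by (simp add: V_def)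
  also have "\<dots> \<le> measure lborel S" by (fact G(4))
  also have "\<dots> \<le> (diameter S)\<^sup>2 * V"
    using measure_le_diameter_power[OF \<open>compact S\<close>] by (simp add: V_def)
  finally have "real (card G) * e\<^sup>2 \<le> (diameter S)\<^sup>2"
    using \<open>0 < V\<close> by (metis mult.assoc mult_right_le_imp_le)
  then have "real (card G) \<le> (diameter S / e)\<^sup>2"
    using \<open>0 < e\<close> by (simp add: field_simps)
  moreover have "ball g e \<subseteq> S" if "g \<in> G" for g
    using G(2) that subset_ball[of e "3 * e" g] \<open>0 < e\<close> by auto
  ultimately show ?thesis using that G(1,3) by blast
qed

lemma mult_one_minus_power_le_exp:
  fixes a q :: real
  assumes "real k \<le> a" "1 / a \<le> q" "q \<le> 1"
  shows "real k * (1 - q) ^ n \<le> a * exp (- real n / a)"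
proof -
  have "(1 - q) ^ n \<le> exp (- q) ^ n"
    using \<open>q \<le> 1\<close> exp_minus_ge[of q] by (intro power_mono) auto
  also have "\<dots> \<le> exp (- real n / a)"
    using mult_left_mono[OF \<open>1 / a \<le> q\<close>, of "real n"] by (simp add: exp_of_nat_mult[symmetric])
  finally show ?thesis using assms by (intro mult_mono) auto
qed

lemma sample_space_hits_net:
  fixes S :: "point set"
  assumes "compact S" "0 < measure lborel S" "0 < e"
  obtains G where "\<And>y. ball y (3 * e) \<subseteq> S \<Longrightarrow> \<exists>g\<in>G. dist g y < 2 * e"
    "1 - (diameter S / e)\<^sup>2 * exp (- real n / (diameter S / e)\<^sup>2) \<le>
       measure (sample_space S n) {X \<in> PiE {..<n} (\<lambda>_. S). \<forall>g\<in>G. \<exists>i<n. X i \<in> ball g e}"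
proof -
  obtain G where G: "finite G" "\<And>g. g \<in> G \<Longrightarrow> ball g e \<subseteq> S"
      "\<And>y. ball y (3 * e) \<subseteq> S \<Longrightarrow> \<exists>g\<in>G. dist g y < 2 * e" "real (card G) \<le> (diameter S / e)\<^sup>2"
    using interior_net_exists[OF \<open>compact S\<close> \<open>0 < e\<close>] by blast
  define V where "V = measure lborel (ball (0::point) 1)"
  define U where "U = uniform_measure lborel S"
  define q where "q = e\<^sup>2 * V / measure lborel S"
  have "0 < V" unfolding V_def by (intro content_ball_pos) simp
  have S_fin: "S \<in> fmeasurable lborel" using \<open>compact S\<close> by (rule fmeasurable_compact)
  have S_em: "emeasure lborel S \<noteq> 0" "emeasure lborel S \<noteq> \<infinity>" "S \<in> sets lborel"
    using emeasure_eq_measure2[OF S_fin] \<open>0 < measure lborel S\<close> S_fin by (simp_all add: fmeasurable_def)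
  then interpret U: prob_space U unfolding U_def by (intro prob_space_uniform_measure)
  have ball_U: "measure U (ball g e) = q" if "g \<in> G" for g
  proof -
    have "measure U (ball g e) = measure lborel (S \<inter> ball g e) / measure lborel S"
      unfolding U_def using S_em by simp
    then show ?thesis
      using G(2)[OF that] content_ball_conv_unit_ball[of e g] \<open>0 < e\<close> by (simp add: q_def V_def Int_absorb1)
  qed
  have "1 - card G * (1 - q) ^ n \<le>
      measure (sample_space S n) {X \<in> PiE {..<n} (\<lambda>_. S). \<forall>g\<in>G. \<exists>i<n. X i \<in> ball g e}"
    unfolding sample_space_def U_def[symmetric]
  proof (rule prob_PiM_every_set_hit[where B = "\<lambda>g. ball g e", OF U.prob_space_axioms _ _ G(1)])
    show "S \<in> sets U" "measure U S = 1"
      unfolding U_def using S_em \<open>0 < measure lborel S\<close> by simp_all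
    show "ball g e \<in> sets U" "ball g e \<subseteq> S" "q \<le> measure U (ball g e)" if "g \<in> G" for g
      using G(2)[OF that] ball_U[OF that] by (simp_all add: U_def)
  qed
  moreover have "card G * (1 - q) ^ n \<le> (diameter S / e)\<^sup>2 * exp (- real n / (diameter S / e)\<^sup>2)"
  proof (cases "G = {}")
    case False
    then obtain g where "g \<in> G" by blast
    then have "q \<le> 1" using ball_U U.prob_le_1[of "ball g e"] by simp
    have "1 / (diameter S / e)\<^sup>2 = e\<^sup>2 * V / ((diameter S)\<^sup>2 * V)"
      using \<open>0 < V\<close> by (simp add: power_divide)
    also have "\<dots> \<le> q"
      unfolding q_def using measure_le_diameter_power[OF \<open>compact S\<close>] \<open>0 < V\<close> \<open>0 < measure lborel S\<close>
      by (intro divide_left_mono) (auto simp: V_def)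
    finally show ?thesis by (rule mult_one_minus_power_le_exp[OF G(4) _ \<open>q \<le> 1\<close>])
  qed simp
  ultimately have "1 - (diameter S / e)\<^sup>2 * exp (- real n / (diameter S / e)\<^sup>2) \<le>
      measure (sample_space S n) {X \<in> PiE {..<n} (\<lambda>_. S). \<forall>g\<in>G. \<exists>i<n. X i \<in> ball g e}"
    by linarith
  with G(3) show ?thesis by (rule that)
qed

lemma net_hit_subset_alpha_edge_event:
  fixes S :: "point set"
  assumes "0 < \<alpha>" "\<alpha> < r" "rolling S r" "rolling (- S) r" and e: "12 * e = \<alpha> - \<alpha>\<^sup>2 / r"
    and net: "\<And>y. ball y (3 * e) \<subseteq> S \<Longrightarrow> \<exists>g\<in>G. dist g y < 2 * e"
  shows "{X \<in> PiE {..<n} (\<lambda>_. S). \<forall>g\<in>G. \<exists>i<n. X i \<in> ball g e} \<subseteq>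
    {X \<in> space (sample_space S n). \<forall>x\<in>frontier S. \<exists>p q. alpha_edge \<alpha> (X ` {..<n}) p q \<and>
       (infdist p (connected_component_set (frontier S) x) \<le> \<alpha> \<or>
        infdist q (connected_component_set (frontier S) x) \<le> \<alpha>)}"
proof (safe)
  fix X x assume X: "X \<in> PiE {..<n} (\<lambda>_. S)" "\<forall>g\<in>G. \<exists>i<n. X i \<in> ball g e" and "x \<in> frontier S"
  have dense: "\<forall>y. ball y (3 * e) \<subseteq> S \<longrightarrow> (\<exists>z\<in>X ` {..<n}. dist z y < 3 * e)"
  proof (intro allI impI)
    fix y assume "ball y (3 * e) \<subseteq> S"
    then obtain g where "g \<in> G" "dist g y < 2 * e" using net by blast
    moreover obtain i where "i < n" "dist g (X i) < e" using X(2) \<open>g \<in> G\<close> by auto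
    ultimately show "\<exists>z\<in>X ` {..<n}. dist z y < 3 * e"
      using dist_triangle[of "X i" y g] by (intro bexI[of _ "X i"]) (auto simp: dist_commute)
  qed
  have "finite (X ` {..<n})" "X ` {..<n} \<subseteq> S" using X(1) by (auto simp: PiE_def)
  moreover have "4 * (3 * e) = \<alpha> - \<alpha>\<^sup>2 / r" using e by simp
  ultimately obtain p q where "alpha_edge \<alpha> (X ` {..<n}) p q" "dist p x \<le> \<alpha>"
    using alpha_edge_near_frontier[OF assms(1-4) _ _ dense _ \<open>x \<in> frontier S\<close>] by blast
  then show "\<exists>p q. alpha_edge \<alpha> (X ` {..<n}) p q \<and>
      (infdist p (connected_component_set (frontier S) x) \<le> \<alpha> \<or>
       infdist q (connected_component_set (frontier S) x) \<le> \<alpha>)"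
    using infdist_le2[of x "connected_component_set (frontier S) x"] \<open>x \<in> frontier S\<close>
    by (auto simp: connected_component_refl)
qed (auto simp: sample_space_def space_PiM PiE_def)

lemma prob_alpha_edge_event_ge:
  fixes S :: "point set"
  assumes "0 < \<alpha>" "\<alpha> < r" "compact S" "S \<noteq> {}" "rolling S r" "rolling (- S) r"
    and e: "12 * e = \<alpha> - \<alpha>\<^sup>2 / r"
  shows "1 - ((diameter S / e)\<^sup>2 + 1) * exp (- real n / ((diameter S / e)\<^sup>2 + 1)) \<le>
    measure (sample_space S n) {X \<in> space (sample_space S n). \<forall>x\<in>frontier S.
      \<exists>p q. alpha_edge \<alpha> (X ` {..<n}) p q \<and>
       (infdist p (connected_component_set (frontier S) x) \<le> \<alpha> \<or>
        infdist q (connected_component_set (frontier S) x) \<le> \<alpha>)}"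
proof -
  have "\<alpha>\<^sup>2 / r < \<alpha>" using assms(1,2) by (simp add: power2_eq_square field_simps)
  then have "0 < e" using e by linarith
  have "0 < measure lborel S"
    using measure_pos_if_rolling_complement[OF _ assms(3,4,6)] assms(1,2) by linarith
  then interpret prob_space "sample_space S n"
    by (rule prob_space_sample_space[OF fmeasurable_compact[OF \<open>compact S\<close>]])
  obtain G where net: "\<And>y. ball y (3 * e) \<subseteq> S \<Longrightarrow> \<exists>g\<in>G. dist g y < 2 * e"
    and hit: "1 - (diameter S / e)\<^sup>2 * exp (- real n / (diameter S / e)\<^sup>2) \<le>
      prob {X \<in> PiE {..<n} (\<lambda>_. S). \<forall>g\<in>G. \<exists>i<n. X i \<in> ball g e}"
    using sample_space_hits_net[OF \<open>compact S\<close> \<open>0 < measure lborel S\<close> \<open>0 < e\<close>] by blast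
  let ?hit = "{X \<in> PiE {..<n} (\<lambda>_. S). \<forall>g\<in>G. \<exists>i<n. X i \<in> ball g e}"
  let ?E = "{X \<in> space (sample_space S n). \<forall>x\<in>frontier S. \<exists>p q. alpha_edge \<alpha> (X ` {..<n}) p q \<and>
    (infdist p (connected_component_set (frontier S) x) \<le> \<alpha> \<or>
     infdist q (connected_component_set (frontier S) x) \<le> \<alpha>)}"
  have "prob ?hit \<le> prob ?E"
  proof (rule finite_measure_mono)
    show "?hit \<subseteq> ?E" using net by (rule net_hit_subset_alpha_edge_event[OF assms(1,2,5,6) e])
  qed (rule sets_sample_space_alpha_edge_event[OF \<open>0 < \<alpha>\<close>])
  then show ?thesis
    using hit mult_exp_le_succ[of "(diameter S / e)\<^sup>2" "real n"] by fastforce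
qed

theorem proposition4:
  fixes \<alpha> r d :: real
  assumes "0 < \<alpha>" and "\<alpha> < r"
  shows "\<exists>A>0. \<forall>S :: point set. \<forall>n::nat.
     compact S \<and> S \<noteq> {} \<and> rolling S r \<and> rolling (- S) r \<and> diameter S = d \<and> n \<ge> 1 \<longrightarrow>
     measure (sample_space S n)
       {X \<in> space (sample_space S n).
          \<forall>x\<in>frontier S. \<exists>p q. alpha_edge \<alpha> (X ` {..<n}) p q \<and>
             (infdist p (connected_component_set (frontier S) x) \<le> \<alpha> \<or>
              infdist q (connected_component_set (frontier S) x) \<le> \<alpha>)}
     \<ge> 1 - A * exp (- real n / A)"
proof -
  define e where "e = (\<alpha> - \<alpha>\<^sup>2 / r) / 12"
  then have "12 * e = \<alpha> - \<alpha>\<^sup>2 / r" by simp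
  then show ?thesis
    using prob_alpha_edge_event_ge[OF assms]
    by (intro exI[of _ "(d / e)\<^sup>2 + 1"]) (auto simp: add_nonneg_pos)
qed

end
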